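(* For $n\geq 2$ let $t_n$ be the number of ordered pairs of words $(w,z)$ over the alphabet $\{A,B,C,D\}$ satisfying: (i) both $w$ and $z$ start with the letter $A$, and $|w|+|z|=n$; (ii) $w$ and $z$ contain the same number of letters $A$; (iii) neither $w$ nor $z$ contains a $CB$-factor (a letter $C$ immediately followed by a letter $B$); (vi) for all $i\geq 1$ and all $k\geq 1$, if the $i$th letter $A$ from the right in $w$ is immediately preceded by a letter $C$ and immediately followed by $k$ consecutive letters $B$, then the $i$th segment of $z$ from the left contains at least $k$ letters $B$. Let $T(x)=\sum_{n\geq 2}t_nx^n$. Then \[T(x)=\frac{x^2(1-2x-x^2+x^3)}{1-8x+21x^2-19x^3-2x^4+11x^5-6x^6+x^7}.\]
   Context: A segment of a word $v$ over $\{A,B,C,D\}$ is a factor (consecutive letters) that starts with a letter $A$ and ends immediately before the next letter $A$, or at the end of $v$. The $i$th segment from the left is the one starting at the $i$th letter $A$ from the left. The words $w$ and $z$ need not have the same length. *)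

theory Defs
  imports "HOL-Computational_Algebra.Formal_Power_Series"
begin

datatype letter = A | B | C | D

type_synonym word = "letter list"

definition apos :: "word \<Rightarrow> nat list" where
  "apos w = filter (\<lambda>p. w ! p = A) [0..<length w]"

definition countA :: "word \<Rightarrow> nat" where
  "countA w = length (filter (\<lambda>c. c = A) w)"

definition has_CB :: "word \<Rightarrow> bool" where
  "has_CB w \<longleftrightarrow> (\<exists>p. Suc p < length w \<and> w ! p = C \<and> w ! Suc p = B)"

text \<open>The i-th segment (i \<ge> 1) of z from the left: starts at the i-th letter A from the left
  and ends just before the next A (or at the end of z).\<close>
definition segment :: "word \<Rightarrow> nat \<Rightarrow> word" where
  "segment z i = (let q = apos z ! (i - 1) in A # takeWhile (\<lambda>c. c \<noteq> A) (drop (Suc q) z))"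

definition countB :: "word \<Rightarrow> nat" where
  "countB w = length (filter (\<lambda>c. c = B) w)"

definition cond_iv :: "word \<Rightarrow> word \<Rightarrow> bool" where
  "cond_iv w z \<longleftrightarrow>
     (\<forall>i k. 1 \<le> i \<longrightarrow> 1 \<le> k \<longrightarrow> i \<le> length (apos w) \<longrightarrow>
        (let p = rev (apos w) ! (i - 1) in
          0 < p \<and> w ! (p - 1) = C \<and> p + k < length w \<and> (\<forall>j\<in>{1..k}. w ! (p + j) = B))
        \<longrightarrow> i \<le> length (apos z) \<and> k \<le> countB (segment z i))"

definition good_pair :: "word \<Rightarrow> word \<Rightarrow> bool" where
  "good_pair w z \<longleftrightarrow>
     w \<noteq> [] \<and> hd w = A \<and> z \<noteq> [] \<and> hd z = A \<and>
     countA w = countA z \<and>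
     \<not> has_CB w \<and> \<not> has_CB z \<and>
     cond_iv w z"

definition t_count :: "nat \<Rightarrow> nat" where
  "t_count n = card {(w, z). length w + length z = n \<and> good_pair w z}"

end

theory Submission
  imports Defs
begin

text \<open>Removing the last segment \<open>A x\<close> of \<open>w\<close> and the first segment \<open>A y\<close> of \<open>z\<close> turns a
  good pair into a good pair (or the empty pair), because the instances \<open>i > 1\<close> of condition (iv)
  are exactly condition (iv) for the remainders. The instance \<open>i = 1\<close> only matters if the
  remainder of \<open>w\<close> ends in C, and then says that the leading B-run of \<open>x\<close> is at most the number
  of Bs in \<open>y\<close>. Recording whether \<open>w\<close> ends in C therefore gives a linear system for two
  generating functions, whose coefficients are rational in the generating function
  \<open>1 / (1 - 3x + x\<^sup>2)\<close> of segment bodies and in that of pairs of bodies satisfying the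
  B-run constraint; solving it gives \<open>T(x)\<close>.\<close>

section \<open>Counting series\<close>

definition finite_fibres :: "('a \<Rightarrow> nat) \<Rightarrow> 'a set \<Rightarrow> bool" where
  "finite_fibres sz S \<longleftrightarrow> (\<forall>n. finite {x\<in>S. sz x = n})"

definition count_fps :: "('a \<Rightarrow> nat) \<Rightarrow> 'a set \<Rightarrow> 'r::comm_semiring_1 fps" where
  "count_fps sz S = Abs_fps (\<lambda>n. of_nat (card {x\<in>S. sz x = n}))"

lemma count_fps_nth [simp]: "fps_nth (count_fps sz S) n = of_nat (card {x\<in>S. sz x = n})"
  by (simp add: count_fps_def)

lemma finite_fibres_subset: "finite_fibres sz T \<Longrightarrow> S \<subseteq> T \<Longrightarrow> finite_fibres sz S"
  unfolding finite_fibres_def by (auto elim!: finite_subset[rotated])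

lemma finite_fibres_length:
  assumes "finite (UNIV :: 'a set)"
  shows "finite_fibres length (S :: 'a list set)"
  unfolding finite_fibres_def
proof
  fix n
  have "finite {xs :: 'a list. set xs \<subseteq> UNIV \<and> length xs = n}"
    by (rule finite_lists_length_eq[OF assms])
  then show "finite {x\<in>S. length x = n}" by (rule finite_subset[rotated]) auto
qed

lemma fibre_Times:
  fixes s1 :: "'a \<Rightarrow> nat" and s2 :: "'b \<Rightarrow> nat"
  shows "{p\<in>S1 \<times> S2. (\<lambda>(a, b). s1 a + s2 b) p = n} =
     (\<Union>i\<in>{0..n}. {a\<in>S1. s1 a = i} \<times> {b\<in>S2. s2 b = n - i})"
  by auto

lemma finite_fibres_Times:
  assumes "finite_fibres s1 S1" "finite_fibres s2 S2"
  shows "finite_fibres (\<lambda>(a, b). s1 a + s2 b) (S1 \<times> S2)"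
  using assms unfolding finite_fibres_def fibre_Times by auto

lemma count_fps_Times:
  assumes "finite_fibres s1 S1" "finite_fibres s2 S2"
  shows "count_fps (\<lambda>(a, b). s1 a + s2 b) (S1 \<times> S2)
    = count_fps s1 S1 * (count_fps s2 S2 :: 'r::comm_semiring_1 fps)"
proof (rule fps_ext)
  fix n
  have "card {p\<in>S1 \<times> S2. (\<lambda>(a, b). s1 a + s2 b) p = n}
      = (\<Sum>i=0..n. card ({a\<in>S1. s1 a = i} \<times> {b\<in>S2. s2 b = n - i}))"
    unfolding fibre_Times
    by (rule card_UN_disjoint) (use assms in \<open>auto simp: finite_fibres_def\<close>)
  also have "\<dots> = (\<Sum>i=0..n. card {a\<in>S1. s1 a = i} * card {b\<in>S2. s2 b = n - i})"
    by (simp add: card_cartesian_product)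
  finally show "fps_nth (count_fps (\<lambda>(a, b). s1 a + s2 b) (S1 \<times> S2)) n
      = fps_nth (count_fps s1 S1 * count_fps s2 S2 :: 'r fps) n"
    by (simp add: fps_mult_nth)
qed

lemma count_fps_image_shift:
  assumes "inj_on f S" "\<And>x. x \<in> S \<Longrightarrow> sz' (f x) = sz x + c"
  shows "count_fps sz' (f ` S) = fps_X ^ c * (count_fps sz S :: 'r::comm_semiring_1 fps)"
proof (rule fps_ext)
  fix n
  have "{y\<in>f ` S. sz' y = n} = f ` {x\<in>S. sz x + c = n}" using assms(2) by auto
  then have "card {y\<in>f ` S. sz' y = n} = card {x\<in>S. sz x + c = n}"
    by (simp add: card_image inj_on_subset[OF assms(1)])
  moreover have "{x\<in>S. sz x + c = n} = (if n < c then {} else {x\<in>S. sz x = n - c})"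
    by auto
  ultimately show "fps_nth (count_fps sz' (f ` S)) n = fps_nth (fps_X ^ c * count_fps sz S :: 'r fps) n"
    by (simp add: fps_X_power_mult_nth)
qed

lemma count_fps_Un_disjoint:
  assumes "finite_fibres sz S" "finite_fibres sz T" "S \<inter> T = {}"
  shows "count_fps sz (S \<union> T) = count_fps sz S + (count_fps sz T :: 'r::comm_semiring_1 fps)"
proof (rule fps_ext)
  fix n
  have "{x\<in>S \<union> T. sz x = n} = {x\<in>S. sz x = n} \<union> {x\<in>T. sz x = n}" by auto
  then have "card {x\<in>S \<union> T. sz x = n} = card {x\<in>S. sz x = n} + card {x\<in>T. sz x = n}"
    using assms by (simp add: card_Un_disjoint finite_fibres_def disjoint_iff)
  then show "fps_nth (count_fps sz (S \<union> T)) n = fps_nth (count_fps sz S + count_fps sz T :: 'r fps) n"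
    by simp
qed

lemma count_fps_Diff:
  assumes "finite_fibres sz S" "T \<subseteq> S"
  shows "count_fps sz (S - T) = count_fps sz S - (count_fps sz T :: 'r::comm_ring_1 fps)"
proof (rule fps_ext)
  fix n
  have fin: "finite {x\<in>S. sz x = n}" using assms(1) by (simp add: finite_fibres_def)
  have sub: "{x\<in>T. sz x = n} \<subseteq> {x\<in>S. sz x = n}" using assms(2) by blast
  have "{x\<in>S - T. sz x = n} = {x\<in>S. sz x = n} - {x\<in>T. sz x = n}" by auto
  then have "card {x\<in>S - T. sz x = n} = card {x\<in>S. sz x = n} - card {x\<in>T. sz x = n}"
    by (simp add: card_Diff_subset finite_subset[OF sub fin] sub)
  then show "fps_nth (count_fps sz (S - T)) n = fps_nth (count_fps sz S - count_fps sz T :: 'r fps) n"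
    by (simp add: of_nat_diff card_mono[OF fin sub])
qed

lemma count_fps_singleton: "sz x = 0 \<Longrightarrow> count_fps sz {x} = (1 :: 'r::comm_semiring_1 fps)"
proof (rule fps_ext)
  fix n
  assume "sz x = 0"
  then have "{y\<in>{x}. sz y = n} = (if n = 0 then {x} else {})" by auto
  then show "fps_nth (count_fps sz {x}) n = fps_nth (1 :: 'r fps) n" by simp
qed

lemma count_fps_Cons:
  "count_fps length (Cons a ` S) = fps_X * (count_fps length S :: 'r::comm_semiring_1 fps)"
  using count_fps_image_shift[of "Cons a" S length length 1] by simp

lemma count_fps_snoc:
  "count_fps length ((\<lambda>y. y @ [a]) ` S) = fps_X * (count_fps length S :: 'r::comm_semiring_1 fps)"
  using count_fps_image_shift[of "\<lambda>y. y @ [a]" S length length 1] by (simp add: inj_on_def)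

section \<open>Segment bodies and their generating functions\<close>

lemma finite_UNIV_letter: "finite (UNIV :: letter set)"
proof -
  have "(UNIV :: letter set) = {A, B, C, D}" using letter.exhaust by auto
  then show ?thesis by (metis finite.emptyI finite.insertI)
qed

lemmas finite_fibres_words = finite_fibres_length[OF finite_UNIV_letter]

abbreviation total_length :: "word \<times> word \<Rightarrow> nat" where
  "total_length \<equiv> \<lambda>(w, z). length w + length z"

lemma finite_fibres_word_pairs: "finite_fibres total_length (S :: (word \<times> word) set)"
  by (rule finite_fibres_subset[OF finite_fibres_Times[OF finite_fibres_words finite_fibres_words]])
    auto

lemma has_CB_Nil [simp]: "\<not> has_CB []"
  by (simp add: has_CB_def)

lemma has_CB_Cons: "has_CB (a # x) \<longleftrightarrow> (a = C \<and> x \<noteq> [] \<and> hd x = B) \<or> has_CB x"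
proof -
  have ex_nat: "(\<exists>p. P p) \<longleftrightarrow> P 0 \<or> (\<exists>p. P (Suc p))" for P :: "nat \<Rightarrow> bool"
    by (metis not0_implies_Suc)
  show ?thesis
    unfolding has_CB_def[of "a # x"] by (subst ex_nat) (auto simp: has_CB_def hd_conv_nth)
qed

lemma has_CB_append:
  "has_CB (xs @ ys) \<longleftrightarrow>
     has_CB xs \<or> has_CB ys \<or> (xs \<noteq> [] \<and> ys \<noteq> [] \<and> last xs = C \<and> hd ys = B)"
  by (induction xs) (auto simp: has_CB_Cons)

text \<open>A segment of a word without CB-factor is A followed by a body.\<close>

definition bodies :: "word set" where
  "bodies = {x. A \<notin> set x \<and> \<not> has_CB x}"

lemma Nil_in_bodies [simp]: "[] \<in> bodies"
  by (simp add: bodies_def)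

lemma Cons_in_bodies_iff:
  "a # x \<in> bodies \<longleftrightarrow> a \<noteq> A \<and> x \<in> bodies \<and> \<not> (a = C \<and> x \<noteq> [] \<and> hd x = B)"
  by (auto simp: bodies_def has_CB_Cons)

lemma snoc_C_in_bodies_iff: "x @ [C] \<in> bodies \<longleftrightarrow> x \<in> bodies"
  by (auto simp: bodies_def has_CB_append has_CB_Cons)

lemma Cons_B_bodies_subset: "Cons B ` bodies \<subseteq> bodies"
  by (auto simp: Cons_in_bodies_iff)

lemma bodies_Diff_Cons_B: "bodies - Cons B ` bodies = {x \<in> bodies. x = [] \<or> hd x \<noteq> B}"
  by (auto simp: Cons_in_bodies_iff neq_Nil_conv)

lemma bodies_decomp:
  "bodies = {[]} \<union> Cons B ` bodies \<union> Cons D ` bodies \<union> Cons C ` (bodies - Cons B ` bodies)"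
proof (intro equalityI subsetI)
  fix x assume x: "x \<in> bodies"
  show "x \<in> {[]} \<union> Cons B ` bodies \<union> Cons D ` bodies \<union> Cons C ` (bodies - Cons B ` bodies)"
  proof (cases x)
    case (Cons a x')
    then show ?thesis using x by (cases a) (auto simp: Cons_in_bodies_iff)
  qed simp
qed (auto simp: bodies_Diff_Cons_B Cons_in_bodies_iff)

lemma count_fps_bodies:
  "count_fps length bodies * (1 - 3 * fps_X + fps_X ^ 2) = (1 :: 'r::idom fps)"
proof -
  let ?L = "count_fps length bodies :: 'r fps"
  note Un = count_fps_Un_disjoint[OF finite_fibres_words finite_fibres_words]
  have "?L = count_fps length
      ({[]} \<union> Cons B ` bodies \<union> Cons D ` bodies \<union> Cons C ` (bodies - Cons B ` bodies))"
    by (rule arg_cong[OF bodies_decomp])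
  also have "\<dots> = count_fps length {[]::word} + count_fps length (Cons B ` bodies)
      + count_fps length (Cons D ` bodies) + count_fps length (Cons C ` (bodies - Cons B ` bodies))"
    by (subst Un, fastforce)+ (rule refl)
  also have "\<dots> = 1 + fps_X * ?L + fps_X * ?L + fps_X * (?L - fps_X * ?L)"
    by (simp add: count_fps_singleton count_fps_Cons
        count_fps_Diff[OF finite_fibres_words Cons_B_bodies_subset])
  finally show ?thesis by algebra
qed

section \<open>Pairs of bodies whose leading B-run is covered\<close>

definition leading_Bs :: "word \<Rightarrow> nat" where
  "leading_Bs x = length (takeWhile (\<lambda>c. c = B) x)"

lemma leading_Bs_simps [simp]:
  "leading_Bs [] = 0" "leading_Bs (B # x) = Suc (leading_Bs x)"
  "a \<noteq> B \<Longrightarrow> leading_Bs (a # x) = 0"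
  by (auto simp: leading_Bs_def)

lemma leading_Bs_eq_0_iff: "leading_Bs x = 0 \<longleftrightarrow> x = [] \<or> hd x \<noteq> B"
  by (cases x) auto

lemma leading_Bs_append_Cons: "a \<noteq> B \<Longrightarrow> leading_Bs (xs @ a # ys) = leading_Bs xs"
  by (induction xs) (auto simp: leading_Bs_def)

lemma countB_simps [simp]:
  "countB [] = 0" "countB (xs @ ys) = countB xs + countB ys"
  "countB (a # x) = (if a = B then Suc (countB x) else countB x)"
  by (auto simp: countB_def)

lemma countB_eq_0_iff: "countB y = 0 \<longleftrightarrow> B \<notin> set y"
  by (induction y) auto

definition CD_words :: "word set" where
  "CD_words = {y. set y \<subseteq> {C, D}}"

text \<open>The part of a body before its first B; it cannot end in C, as that would create a CB-factor.\<close>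

definition B_prefixes :: "word set" where
  "B_prefixes = {y. set y \<subseteq> {C, D} \<and> (y = [] \<or> last y = D)}"

lemma CD_words_decomp: "CD_words = {[]} \<union> Cons C ` CD_words \<union> Cons D ` CD_words"
proof (intro equalityI subsetI)
  fix y assume "y \<in> CD_words"
  then show "y \<in> {[]} \<union> Cons C ` CD_words \<union> Cons D ` CD_words"
    by (cases y) (auto simp: CD_words_def)
qed (auto simp: CD_words_def)

lemma B_prefixes_eq: "B_prefixes = {[]} \<union> (\<lambda>y. y @ [D]) ` CD_words"
proof (intro equalityI subsetI)
  fix y assume y: "y \<in> B_prefixes"
  show "y \<in> {[]} \<union> (\<lambda>y. y @ [D]) ` CD_words"
  proof (cases y rule: rev_cases)
    case (snoc y' d)
    then show ?thesis using y by (auto simp: B_prefixes_def CD_words_def)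
  qed simp
qed (auto simp: B_prefixes_def CD_words_def)

lemma count_fps_CD_words: "count_fps length CD_words * (1 - 2 * fps_X) = (1 :: 'r::idom fps)"
proof -
  let ?Y = "count_fps length CD_words :: 'r fps"
  note Un = count_fps_Un_disjoint[OF finite_fibres_words finite_fibres_words]
  have "?Y = count_fps length ({[]} \<union> Cons C ` CD_words \<union> Cons D ` CD_words)"
    by (rule arg_cong[OF CD_words_decomp])
  also have "\<dots> = 1 + fps_X * ?Y + fps_X * ?Y"
    by (subst Un, fastforce)+ (simp add: count_fps_singleton count_fps_Cons)
  finally show ?thesis by algebra
qed

lemma count_fps_B_prefixes:
  "count_fps length B_prefixes * (1 - 2 * fps_X) = (1 - fps_X :: 'r::idom fps)"
proof -
  have "count_fps length B_prefixes = 1 + fps_X * (count_fps length CD_words :: 'r fps)"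
    unfolding B_prefixes_eq
    by (subst count_fps_Un_disjoint[OF finite_fibres_words finite_fibres_words])
      (auto simp: count_fps_singleton count_fps_snoc)
  with count_fps_CD_words[where 'r = 'r] show ?thesis by algebra
qed

definition covered_pairs :: "(word \<times> word) set" where
  "covered_pairs = {(x, y). x \<in> bodies \<and> y \<in> bodies \<and> leading_Bs x \<le> countB y}"

text \<open>Every covered pair \<open>(x, y)\<close> with \<open>x\<close> starting with B arises in this way, with \<open>y1\<close> the
  part of \<open>y\<close> before its first B.\<close>

definition insert_Bs :: "word \<times> (word \<times> word) \<Rightarrow> word \<times> word" where
  "insert_Bs = (\<lambda>(y1, (x, y2)). (B # x, y1 @ B # y2))"

lemma append_Cons_eq_iff_notin_prefixes:
  "a \<notin> set xs \<Longrightarrow> a \<notin> set xs' \<Longrightarrow> xs @ a # ys = xs' @ a # ys' \<longleftrightarrow> xs = xs' \<and> ys = ys'"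
proof (induction xs arbitrary: xs')
  case Nil
  then show ?case by (cases xs') auto
next
  case (Cons b xs)
  then show ?case by (cases xs') auto
qed

lemma B_notin_B_prefix: "y \<in> B_prefixes \<Longrightarrow> B \<notin> set y"
  by (auto simp: B_prefixes_def)

lemma B_prefix_append_in_bodies_iff:
  assumes "y1 \<in> B_prefixes"
  shows "y1 @ B # y2 \<in> bodies \<longleftrightarrow> y2 \<in> bodies"
proof -
  have "A \<notin> set y1" "\<not> has_CB y1"
    using assms by (auto simp: B_prefixes_def has_CB_def dest!: nth_mem)
  then show ?thesis using assms
    by (auto simp: B_prefixes_def bodies_def has_CB_append has_CB_Cons)
qed

lemma covered_pairs_decomp:
  "covered_pairs = {x \<in> bodies. leading_Bs x = 0} \<times> bodies \<union> insert_Bs ` (B_prefixes \<times> covered_pairs)"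
proof (intro equalityI subsetI)
  fix p assume "p \<in> covered_pairs"
  then obtain x y where p: "p = (x, y)" and x: "x \<in> bodies" and y: "y \<in> bodies"
    and le: "leading_Bs x \<le> countB y" by (auto simp: covered_pairs_def)
  show "p \<in> {x \<in> bodies. leading_Bs x = 0} \<times> bodies \<union> insert_Bs ` (B_prefixes \<times> covered_pairs)"
  proof (cases "leading_Bs x = 0")
    case False
    then obtain x' where x': "x = B # x'" by (cases x) (auto simp: leading_Bs_eq_0_iff)
    then have "B \<in> set y" using le countB_eq_0_iff[of y] by auto
    then obtain y1 y2 where y12: "y = y1 @ B # y2" and nB: "B \<notin> set y1"
      using split_list_first by metis
    have "set y1 \<subseteq> {C, D}"
    proof
      fix c assume "c \<in> set y1"
      then show "c \<in> {C, D}" using letter.exhaust[of c] y y12 nB by (auto simp: bodies_def)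
    qed
    moreover have "y1 = [] \<or> last y1 = D"
    proof (rule ccontr)
      assume "\<not> (y1 = [] \<or> last y1 = D)"
      then have "y1 \<noteq> []" "last y1 = C"
        using \<open>set y1 \<subseteq> {C, D}\<close> last_in_set[of y1] by blast+
      then show False using y y12 by (simp add: bodies_def has_CB_append)
    qed
    ultimately have y1: "y1 \<in> B_prefixes" by (simp add: B_prefixes_def)
    have "(x', y2) \<in> covered_pairs"
      using x x' y y12 le nB y1 B_prefix_append_in_bodies_iff
      by (auto simp: covered_pairs_def Cons_in_bodies_iff countB_eq_0_iff[symmetric])
    then show ?thesis
      using p x' y12 y1 by (auto simp: insert_Bs_def intro!: image_eqI[where x = "(y1, (x', y2))"])
  qed (use p x y in auto)
next
  fix p assume "p \<in> {x \<in> bodies. leading_Bs x = 0} \<times> bodies \<union> insert_Bs ` (B_prefixes \<times> covered_pairs)"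
  then show "p \<in> covered_pairs"
    by (auto simp: covered_pairs_def insert_Bs_def B_prefix_append_in_bodies_iff Cons_in_bodies_iff
        B_prefixes_def countB_eq_0_iff[symmetric])
qed

lemma count_fps_covered_pairs:
  "count_fps total_length covered_pairs * (1 - 2 * fps_X - fps_X ^ 2 + fps_X ^ 3)
     = ((1 - fps_X) * (1 - 2 * fps_X) * count_fps length bodies ^ 2 :: 'r::idom fps)"
proof -
  let ?L = "count_fps length bodies :: 'r fps"
  let ?R = "count_fps total_length covered_pairs :: 'r fps"
  have inj: "inj_on insert_Bs (B_prefixes \<times> covered_pairs)"
  proof (rule inj_onI)
    fix u v assume "u \<in> B_prefixes \<times> covered_pairs" "v \<in> B_prefixes \<times> covered_pairs"
      and "insert_Bs u = insert_Bs v"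
    then show "u = v"
      by (auto simp: insert_Bs_def append_Cons_eq_iff_notin_prefixes dest!: B_notin_B_prefix)
  qed
  have "?R = count_fps total_length ({x \<in> bodies. leading_Bs x = 0} \<times> bodies)
      + count_fps total_length (insert_Bs ` (B_prefixes \<times> covered_pairs))"
    by (subst covered_pairs_decomp, rule count_fps_Un_disjoint[OF finite_fibres_word_pairs
          finite_fibres_word_pairs]) (auto simp: insert_Bs_def)
  also have "count_fps total_length ({x \<in> bodies. leading_Bs x = 0} \<times> bodies) = (?L - fps_X * ?L) * ?L"
    by (simp add: count_fps_Times[OF finite_fibres_words finite_fibres_words] leading_Bs_eq_0_iff
        bodies_Diff_Cons_B[symmetric] count_fps_Diff[OF finite_fibres_words Cons_B_bodies_subset]
        count_fps_Cons)
  also have "count_fps total_length (insert_Bs ` (B_prefixes \<times> covered_pairs))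
      = fps_X ^ 2 * (count_fps length B_prefixes * ?R)"
    by (subst count_fps_image_shift[of insert_Bs _ total_length
          "\<lambda>(y1, p). length y1 + total_length p" 2, OF inj])
      (auto simp: insert_Bs_def count_fps_Times[OF finite_fibres_words finite_fibres_word_pairs])
  finally have "?R = (?L - fps_X * ?L) * ?L + fps_X ^ 2 * (count_fps length B_prefixes * ?R)" .
  with count_fps_B_prefixes[where 'r = 'r] show ?thesis by algebra
qed

section \<open>Condition (iv) as a dominance of lists\<close>

lemma apos_Nil [simp]: "apos [] = []"
  by (simp add: apos_def)

lemma apos_Cons: "apos (a # x) = (if a = A then 0 # map Suc (apos x) else map Suc (apos x))"
proof -
  have "[0..<length (a # x)] = 0 # map Suc [0..<length x]"
    by (simp add: upt_conv_Cons map_Suc_upt del: upt_Suc)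
  then show ?thesis by (simp add: apos_def filter_map comp_def)
qed

lemma apos_append: "apos (xs @ ys) = apos xs @ map (\<lambda>p. p + length xs) (apos ys)"
  by (induction xs) (auto simp: apos_Cons comp_def)

lemma apos_eq_Nil: "A \<notin> set x \<Longrightarrow> apos x = []"
  by (induction x) (auto simp: apos_Cons)

lemma set_apos: "p \<in> set (apos w) \<longleftrightarrow> p < length w \<and> w ! p = A"
  by (auto simp: apos_def)

text \<open>Entry \<open>i\<close> of \<open>trigger_runs w\<close> is the largest \<open>k\<close> for which the hypothesis of
  condition (iv) holds at the \<open>(i + 1)\<close>-th A from the right, or 0 if there is none.\<close>

definition trigger_runs :: "word \<Rightarrow> nat list" where
  "trigger_runs w =
     map (\<lambda>p. if 0 < p \<and> w ! (p - 1) = C then leading_Bs (drop (Suc p) w) else 0) (rev (apos w))"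

definition segment_Bcounts :: "word \<Rightarrow> nat list" where
  "segment_Bcounts z = map (\<lambda>q. countB (takeWhile (\<lambda>c. c \<noteq> A) (drop (Suc q) z))) (apos z)"

definition dominated :: "nat list \<Rightarrow> nat list \<Rightarrow> bool" where
  "dominated ts ss \<longleftrightarrow> (\<forall>i<length ts. 0 < ts ! i \<longrightarrow> i < length ss \<and> ts ! i \<le> ss ! i)"

lemma length_trigger_runs [simp]: "length (trigger_runs w) = length (apos w)"
  by (simp add: trigger_runs_def)

lemma length_segment_Bcounts [simp]: "length (segment_Bcounts z) = length (apos z)"
  by (simp add: segment_Bcounts_def)

lemma dominated_Nil: "dominated [] ss"
  by (simp add: dominated_def)

lemma dominated_Cons_Cons:
  "dominated (t # ts) (s # ss) \<longleftrightarrow> (0 < t \<longrightarrow> t \<le> s) \<and> dominated ts ss"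
  by (simp add: dominated_def All_less_Suc2)

lemma le_length_takeWhile_iff:
  "k \<le> length (takeWhile P xs) \<longleftrightarrow> k \<le> length xs \<and> (\<forall>j<k. P (xs ! j))"
proof (induction xs arbitrary: k)
  case (Cons x xs)
  then show ?case by (cases k) (auto simp: All_less_Suc2)
qed auto

lemma le_leading_Bs_drop_iff:
  "k \<le> leading_Bs (drop (Suc p) w) \<longleftrightarrow> p + k < length w \<and> (\<forall>j\<in>{1..k}. w ! (p + j) = B)"
  if "1 \<le> k"
proof -
  have "(\<forall>j<k. w ! (Suc p + j) = B) \<longleftrightarrow> (\<forall>j\<in>{1..k}. w ! (p + j) = B)"
    unfolding image_Suc_lessThan[symmetric] by auto
  then show ?thesis
    using that by (auto simp: leading_Bs_def le_length_takeWhile_iff)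
qed

lemma trigger_iff_le_trigger_runs:
  assumes "i < length (apos w)" "1 \<le> k"
  shows "(let p = rev (apos w) ! i in
            0 < p \<and> w ! (p - 1) = C \<and> p + k < length w \<and> (\<forall>j\<in>{1..k}. w ! (p + j) = B))
    \<longleftrightarrow> k \<le> trigger_runs w ! i"
  using assms le_leading_Bs_drop_iff[OF assms(2)] by (auto simp: trigger_runs_def Let_def)

lemma countB_segment:
  "i < length (apos z) \<Longrightarrow> countB (segment z (Suc i)) = segment_Bcounts z ! i"
  by (simp add: segment_def segment_Bcounts_def)

lemma cond_iv_iff_dominated: "cond_iv w z \<longleftrightarrow> dominated (trigger_runs w) (segment_Bcounts z)"
proof
  assume iv: "cond_iv w z"
  show "dominated (trigger_runs w) (segment_Bcounts z)" unfolding dominated_def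
  proof (intro allI impI)
    fix i assume "i < length (trigger_runs w)" "0 < trigger_runs w ! i"
    then have i: "i < length (apos w)" and k: "1 \<le> trigger_runs w ! i" by auto
    have "Suc i \<le> length (apos z) \<and> trigger_runs w ! i \<le> countB (segment z (Suc i))"
      using iv[unfolded cond_iv_def, rule_format, of "Suc i" "trigger_runs w ! i"] i k
        trigger_iff_le_trigger_runs[OF i k]
      by simp
    then show "i < length (segment_Bcounts z) \<and> trigger_runs w ! i \<le> segment_Bcounts z ! i"
      by (auto simp: countB_segment Suc_le_eq)
  qed
next
  assume dom: "dominated (trigger_runs w) (segment_Bcounts z)"
  show "cond_iv w z" unfolding cond_iv_def
  proof (intro allI impI)
    fix i k :: nat
    assume "1 \<le> i" "1 \<le> k" "i \<le> length (apos w)"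
      and trig: "let p = rev (apos w) ! (i - 1) in
        0 < p \<and> w ! (p - 1) = C \<and> p + k < length w \<and> (\<forall>j\<in>{1..k}. w ! (p + j) = B)"
    then obtain i' where i': "i = Suc i'" "i' < length (apos w)" and k: "1 \<le> k"
      by (metis Suc_le_D Suc_le_eq One_nat_def)
    then have "k \<le> trigger_runs w ! i'"
      using trig trigger_iff_le_trigger_runs[OF i'(2) k] by simp
    then show "i \<le> length (apos z) \<and> k \<le> countB (segment z i)"
      using dom k i' unfolding dominated_def by (fastforce simp: countB_segment)
  qed
qed

section \<open>Splitting off the last segment of w and the first segment of z\<close>

definition ends_in_C :: "word \<Rightarrow> bool" where
  "ends_in_C x \<longleftrightarrow> x \<noteq> [] \<and> last x = C"

lemma ends_in_C_append_A [simp]: "ends_in_C (w @ A # x) \<longleftrightarrow> ends_in_C x"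
  by (cases x rule: rev_cases) (auto simp: ends_in_C_def)

lemma ends_in_C_Cons_A [simp]: "ends_in_C (A # x) \<longleftrightarrow> ends_in_C x"
  using ends_in_C_append_A[of "[]"] by simp

lemma countA_simps [simp]:
  "countA [] = 0" "countA (xs @ ys) = countA xs + countA ys"
  "countA (a # x) = (if a = A then Suc (countA x) else countA x)"
  by (auto simp: countA_def)

lemma countA_eq_0_iff: "countA x = 0 \<longleftrightarrow> A \<notin> set x"
  by (induction x) auto

lemma trigger_runs_append_segment:
  assumes "A \<notin> set x"
  shows "trigger_runs (w @ A # x) = (if ends_in_C w then leading_Bs x else 0) # trigger_runs w"
proof -
  have apos: "apos (w @ A # x) = apos w @ [length w]"
    using assms by (simp add: apos_append apos_Cons apos_eq_Nil)
  have last_A: "(if 0 < length w \<and> (w @ A # x) ! (length w - 1) = C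
        then leading_Bs (drop (Suc (length w)) (w @ A # x)) else 0)
      = (if ends_in_C w then leading_Bs x else 0)"
    by (cases w rule: rev_cases) (auto simp: ends_in_C_def nth_append)
  have "(if 0 < p \<and> (w @ A # x) ! (p - 1) = C then leading_Bs (drop (Suc p) (w @ A # x)) else 0)
      = (if 0 < p \<and> w ! (p - 1) = C then leading_Bs (drop (Suc p) w) else 0)"
    if "p \<in> set (rev (apos w))" for p
  proof -
    have "p < length w" using that by (simp add: set_apos)
    then show ?thesis by (auto simp: nth_append leading_Bs_append_Cons)
  qed
  then show ?thesis
    unfolding trigger_runs_def apos using last_A by simp
qed

lemma takeWhile_not_A_append:
  "A \<notin> set y \<Longrightarrow> z = [] \<or> hd z = A \<Longrightarrow> takeWhile (\<lambda>c. c \<noteq> A) (y @ z) = y"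
  by (cases z) (auto simp: takeWhile_tail)

lemma segment_Bcounts_segment_append:
  assumes "A \<notin> set y" "z = [] \<or> hd z = A"
  shows "segment_Bcounts (A # y @ z) = countB y # segment_Bcounts z"
proof -
  have "apos (A # y @ z) = 0 # map (\<lambda>q. Suc (q + length y)) (apos z)"
    using assms by (simp add: apos_append apos_Cons apos_eq_Nil comp_def)
  then show ?thesis
    using takeWhile_not_A_append[OF assms] by (simp add: segment_Bcounts_def comp_def)
qed

lemma good_pair_single_segment:
  assumes "A \<notin> set x" "A \<notin> set y"
  shows "good_pair (A # x) (A # y) \<longleftrightarrow> x \<in> bodies \<and> y \<in> bodies"
proof -
  have "trigger_runs (A # x) = [0]"
    using trigger_runs_append_segment[OF assms(1), of "[]"]
    by (simp add: ends_in_C_def trigger_runs_def)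
  moreover have "segment_Bcounts (A # y) = [countB y]"
    using segment_Bcounts_segment_append[OF assms(2), of "[]"] by (simp add: segment_Bcounts_def)
  ultimately have "cond_iv (A # x) (A # y)"
    by (simp add: cond_iv_iff_dominated dominated_Cons_Cons dominated_Nil)
  then show ?thesis
    using assms by (auto simp: good_pair_def bodies_def has_CB_Cons countA_eq_0_iff[symmetric])
qed

lemma good_pair_append_segment:
  assumes "A \<notin> set x" "A \<notin> set y" "w \<noteq> []" "hd w = A" "z \<noteq> []" "hd z = A"
  shows "good_pair (w @ A # x) (A # y @ z) \<longleftrightarrow>
    good_pair w z \<and> x \<in> bodies \<and> y \<in> bodies \<and> (ends_in_C w \<longrightarrow> leading_Bs x \<le> countB y)"
proof -
  have "cond_iv (w @ A # x) (A # y @ z) \<longleftrightarrow>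
      cond_iv w z \<and> (ends_in_C w \<longrightarrow> leading_Bs x \<le> countB y)"
    using assms by (auto simp: cond_iv_iff_dominated trigger_runs_append_segment
        segment_Bcounts_segment_append dominated_Cons_Cons)
  moreover have "has_CB (w @ A # x) \<longleftrightarrow> has_CB w \<or> has_CB x"
    "has_CB (A # y @ z) \<longleftrightarrow> has_CB y \<or> has_CB z"
    using assms by (auto simp: has_CB_append has_CB_Cons)
  ultimately show ?thesis
    using assms by (auto simp: good_pair_def bodies_def countA_eq_0_iff[symmetric])
qed

lemma good_pair_cases:
  assumes "good_pair w z"
  obtains (single) x y where "w = A # x" "z = A # y" "x \<in> bodies" "y \<in> bodies"
  | (append) w' z' x y where "w = w' @ A # x" "z = A # y @ z'" "good_pair w' z'"
      "x \<in> bodies" "y \<in> bodies" "ends_in_C w' \<longrightarrow> leading_Bs x \<le> countB y"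
proof -
  have w: "w \<noteq> []" "hd w = A" and z: "z \<noteq> []" "hd z = A" and cA: "countA w = countA z"
    using assms by (auto simp: good_pair_def)
  have "A \<in> set w" using w by (cases w) auto
  then obtain w' x where wx: "w = w' @ A # x" and x: "A \<notin> set x"
    using split_list_last by metis
  obtain r where zr: "z = A # r" using z by (cases z) auto
  define y where "y = takeWhile (\<lambda>c. c \<noteq> A) r"
  define z' where "z' = dropWhile (\<lambda>c. c \<noteq> A) r"
  have zy: "z = A # y @ z'" using zr by (simp add: y_def z'_def)
  have y: "A \<notin> set y" by (auto simp: y_def dest: set_takeWhileD)
  have z': "z' = [] \<or> hd z' = A" using hd_dropWhile[of "\<lambda>c. c \<noteq> A" r] by (auto simp: z'_def)
  have cA': "countA w' = countA z'" using cA wx zy x y by (simp add: countA_eq_0_iff[symmetric])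
  show thesis
  proof (cases "w' = []")
    case True
    then have "z' = []" using cA' z' by (cases z') auto
    then show thesis
      using single True wx zy assms good_pair_single_segment[OF x y] by simp
  next
    case False
    then have "hd w' = A" using w wx by simp
    moreover have "z' \<noteq> []" using cA' False \<open>hd w' = A\<close> by (cases w') auto
    ultimately show thesis
      using append wx zy assms good_pair_append_segment[OF x y False] z' by auto
  qed
qed

section \<open>The system of equations for good pairs\<close>

definition good_pairs :: "(word \<times> word) set" where
  "good_pairs = {(w, z). good_pair w z}"

definition good_pairs_endC :: "bool \<Rightarrow> (word \<times> word) set" where
  "good_pairs_endC e = {p \<in> good_pairs. ends_in_C (fst p) = e}"

definition body_pairs_endC :: "bool \<Rightarrow> (word \<times> word) set" where
  "body_pairs_endC e = {(x, y). x \<in> bodies \<and> y \<in> bodies \<and> ends_in_C x = e}"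

definition covered_pairs_endC :: "bool \<Rightarrow> (word \<times> word) set" where
  "covered_pairs_endC e = {p \<in> covered_pairs. ends_in_C (fst p) = e}"

definition single_segment :: "word \<times> word \<Rightarrow> word \<times> word" where
  "single_segment = (\<lambda>(x, y). (A # x, A # y))"

definition append_segment :: "(word \<times> word) \<times> (word \<times> word) \<Rightarrow> word \<times> word" where
  "append_segment = (\<lambda>((w, z), (x, y)). (w @ A # x, A # y @ z))"

lemma bodies_not_A: "x \<in> bodies \<Longrightarrow> A \<notin> set x"
  by (simp add: bodies_def)

lemma good_pair_hd: "good_pair w z \<Longrightarrow> w \<noteq> [] \<and> hd w = A \<and> z \<noteq> [] \<and> hd z = A"
  by (simp add: good_pair_def)

lemma inj_on_append_segment: "inj_on append_segment (good_pairs \<times> (bodies \<times> bodies))"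
proof (rule inj_onI)
  fix u v
  assume "u \<in> good_pairs \<times> (bodies \<times> bodies)" "v \<in> good_pairs \<times> (bodies \<times> bodies)"
    and eq: "append_segment u = append_segment v"
  then obtain w1 z1 x1 y1 w2 z2 x2 y2
    where u: "u = ((w1, z1), (x1, y1))" and v: "v = ((w2, z2), (x2, y2))"
    and good: "good_pair w1 z1" "good_pair w2 z2"
    and bodies: "x1 \<in> bodies" "y1 \<in> bodies" "x2 \<in> bodies" "y2 \<in> bodies"
    by (auto simp: good_pairs_def)
  have "w1 @ A # x1 = w2 @ A # x2" using eq by (simp add: u v append_segment_def)
  then have "rev (w1 @ A # x1) = rev (w2 @ A # x2)" by (rule arg_cong)
  then have "rev x1 @ A # rev w1 = rev x2 @ A # rev w2" by simp
  then have "x1 = x2" "w1 = w2"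
    using bodies by (auto simp: append_Cons_eq_iff_notin_prefixes bodies_def)
  moreover have "y1 = y2"
    using eq good takeWhile_not_A_append[OF bodies_not_A[OF bodies(2)], of z1]
      takeWhile_not_A_append[OF bodies_not_A[OF bodies(4)], of z2]
    by (auto simp: u v append_segment_def dest: good_pair_hd)
  ultimately show "u = v" using eq by (simp add: u v append_segment_def)
qed

lemma good_pairs_endC_decomp:
  "good_pairs_endC e = single_segment ` body_pairs_endC e
     \<union> append_segment ` (good_pairs_endC False \<times> body_pairs_endC e)
     \<union> append_segment ` (good_pairs_endC True \<times> covered_pairs_endC e)"
    (is "_ = ?S \<union> ?F \<union> ?T")
proof (intro equalityI subsetI)
  fix p assume "p \<in> good_pairs_endC e"
  then obtain w z where p: "p = (w, z)" and good: "good_pair w z" and e: "ends_in_C w = e"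
    by (auto simp: good_pairs_endC_def good_pairs_def)
  from good show "p \<in> ?S \<union> ?F \<union> ?T"
  proof (cases rule: good_pair_cases)
    case (single x y)
    then have "(x, y) \<in> body_pairs_endC e"
      using e by (auto simp: body_pairs_endC_def)
    then show ?thesis using single p by (auto simp: single_segment_def image_iff)
  next
    case (append w' z' x y)
    then have "p = append_segment ((w', z'), (x, y))" "ends_in_C x = e"
      using p e by (auto simp: append_segment_def)
    then show ?thesis
      using append
      by (cases "ends_in_C w'") (auto simp: good_pairs_endC_def good_pairs_def body_pairs_endC_def
          covered_pairs_endC_def covered_pairs_def)
  qed
next
  fix p assume "p \<in> ?S \<union> ?F \<union> ?T"
  then consider (single) x y where "p = (A # x, A # y)" "x \<in> bodies" "y \<in> bodies"
      "ends_in_C x = e"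
    | (append) w z x y where "p = (w @ A # x, A # y @ z)" "good_pair w z" "x \<in> bodies"
      "y \<in> bodies" "ends_in_C x = e" "ends_in_C w \<longrightarrow> leading_Bs x \<le> countB y"
    by (elim UnE imageE) (fastforce simp: single_segment_def append_segment_def good_pairs_endC_def
        good_pairs_def body_pairs_endC_def covered_pairs_endC_def covered_pairs_def)+
  then show "p \<in> good_pairs_endC e"
  proof cases
    case single
    then show ?thesis
      by (simp add: good_pairs_endC_def good_pairs_def good_pair_single_segment bodies_not_A)
  next
    case append
    then show ?thesis
      by (simp add: good_pairs_endC_def good_pairs_def good_pair_append_segment bodies_not_A
          good_pair_hd)
  qed
qed

lemma single_segment_neq_append_segment:
  "x \<in> bodies \<Longrightarrow> good_pair w z \<Longrightarrow> single_segment (x, y) \<noteq> append_segment ((w, z), (x', y'))"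
  by (auto simp: single_segment_def append_segment_def Cons_eq_append_conv bodies_def
      dest!: good_pair_hd)

lemma count_fps_good_pairs_endC:
  "count_fps total_length (good_pairs_endC e) =
     fps_X ^ 2 * count_fps total_length (body_pairs_endC e)
     + fps_X ^ 2 * (count_fps total_length (good_pairs_endC False)
         * count_fps total_length (body_pairs_endC e))
     + fps_X ^ 2 * (count_fps total_length (good_pairs_endC True)
         * (count_fps total_length (covered_pairs_endC e) :: 'r::comm_semiring_1 fps))"
proof -
  let ?N = "\<lambda>S. count_fps total_length S :: 'r fps"
  let ?len2 = "\<lambda>(p, q). total_length p + total_length q"
  let ?F = "good_pairs_endC False \<times> body_pairs_endC e"
  let ?T = "good_pairs_endC True \<times> covered_pairs_endC e"
  note Un = count_fps_Un_disjoint[OF finite_fibres_word_pairs finite_fibres_word_pairs]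
  note Times = count_fps_Times[OF finite_fibres_word_pairs finite_fibres_word_pairs]
  have F_sub: "?F \<subseteq> good_pairs \<times> (bodies \<times> bodies)"
    by (auto simp: good_pairs_endC_def body_pairs_endC_def)
  have T_sub: "?T \<subseteq> good_pairs \<times> (bodies \<times> bodies)"
    by (auto simp: good_pairs_endC_def covered_pairs_endC_def covered_pairs_def)
  have "append_segment ` ?F \<inter> append_segment ` ?T = append_segment ` (?F \<inter> ?T)"
    by (rule inj_on_image_Int[OF inj_on_append_segment F_sub T_sub, symmetric])
  also have "?F \<inter> ?T = {}" by (auto simp: good_pairs_endC_def)
  finally have disj_FT: "append_segment ` ?F \<inter> append_segment ` ?T = {}" by simp
  have disj_S: "single_segment ` body_pairs_endC e \<inter> append_segment ` S = {}"
    if S: "S \<subseteq> good_pairs \<times> (bodies \<times> bodies)" for S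
  proof -
    have "single_segment q \<noteq> append_segment u" if "q \<in> body_pairs_endC e" "u \<in> S" for q u
      using that S single_segment_neq_append_segment
      by (cases q; cases u) (auto simp: body_pairs_endC_def good_pairs_def)
    then show ?thesis by blast
  qed
  have single: "?N (single_segment ` body_pairs_endC e) = fps_X ^ 2 * ?N (body_pairs_endC e)"
    by (rule count_fps_image_shift) (auto simp: inj_on_def single_segment_def)
  have append: "?N (append_segment ` S) = fps_X ^ 2 * count_fps ?len2 S"
    if "S \<subseteq> good_pairs \<times> (bodies \<times> bodies)" for S
    by (rule count_fps_image_shift[OF inj_on_subset[OF inj_on_append_segment that]])
      (auto simp: append_segment_def)
  show ?thesis
    using disj_FT disj_S[OF F_sub] disj_S[OF T_sub]
    by (subst good_pairs_endC_decomp) (simp add: Un Int_Un_distrib Int_Un_distrib2 single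
        append[OF F_sub] append[OF T_sub] Times)
qed

lemma count_fps_good_pairs:
  "count_fps total_length good_pairs = count_fps total_length (good_pairs_endC False)
     + (count_fps total_length (good_pairs_endC True) :: 'r::comm_semiring_1 fps)"
proof -
  have "count_fps total_length good_pairs
      = (count_fps total_length (good_pairs_endC False \<union> good_pairs_endC True) :: 'r fps)"
    by (rule arg_cong) (auto simp: good_pairs_endC_def)
  also have "\<dots> = count_fps total_length (good_pairs_endC False)
      + count_fps total_length (good_pairs_endC True)"
    by (rule count_fps_Un_disjoint[OF finite_fibres_word_pairs finite_fibres_word_pairs])
      (auto simp: good_pairs_endC_def)
  finally show ?thesis .
qed

lemma snoc_C_bodies: "{x \<in> bodies. ends_in_C x} = (\<lambda>x. x @ [C]) ` bodies"
proof (intro equalityI subsetI)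
  fix x assume "x \<in> {x \<in> bodies. ends_in_C x}"
  then show "x \<in> (\<lambda>x. x @ [C]) ` bodies"
    by (cases x rule: rev_cases) (auto simp: ends_in_C_def snoc_C_in_bodies_iff)
qed (auto simp: ends_in_C_def snoc_C_in_bodies_iff)

lemma count_fps_body_pairs_endC:
  "count_fps total_length (body_pairs_endC True)
     = fps_X * (count_fps length bodies ^ 2 :: 'r::comm_ring_1 fps)"
  "count_fps total_length (body_pairs_endC False)
     = (count_fps length bodies - fps_X * count_fps length bodies)
       * (count_fps length bodies :: 'r fps)"
proof -
  note Times = count_fps_Times[OF finite_fibres_words finite_fibres_words]
  have "body_pairs_endC True = {x \<in> bodies. ends_in_C x} \<times> bodies"
    "body_pairs_endC False = (bodies - {x \<in> bodies. ends_in_C x}) \<times> bodies"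
    by (auto simp: body_pairs_endC_def)
  then show "count_fps total_length (body_pairs_endC True)
      = fps_X * (count_fps length bodies ^ 2 :: 'r fps)"
    "count_fps total_length (body_pairs_endC False)
       = (count_fps length bodies - fps_X * count_fps length bodies)
         * (count_fps length bodies :: 'r fps)"
    by (simp_all add: Times snoc_C_bodies count_fps_snoc power2_eq_square mult.assoc
        count_fps_Diff[OF finite_fibres_words] image_subset_iff snoc_C_in_bodies_iff)
qed

lemma count_fps_covered_pairs_endC:
  "count_fps total_length (covered_pairs_endC True)
     = fps_X * (count_fps total_length covered_pairs :: 'r::comm_ring_1 fps)"
  "count_fps total_length (covered_pairs_endC False)
     = count_fps total_length covered_pairs
       - fps_X * (count_fps total_length covered_pairs :: 'r fps)"
proof -
  have endC: "covered_pairs_endC True = (\<lambda>(x, y). (x @ [C], y)) ` covered_pairs"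
  proof (intro equalityI subsetI)
    fix p assume "p \<in> covered_pairs_endC True"
    then obtain x y where "p = (x @ [C], y)" "(x @ [C], y) \<in> covered_pairs"
      by (cases p; cases "fst p" rule: rev_cases) (auto simp: covered_pairs_endC_def ends_in_C_def)
    then show "p \<in> (\<lambda>(x, y). (x @ [C], y)) ` covered_pairs"
      by (auto simp: covered_pairs_def snoc_C_in_bodies_iff leading_Bs_append_Cons image_iff)
  qed (auto simp: covered_pairs_endC_def covered_pairs_def ends_in_C_def snoc_C_in_bodies_iff
      leading_Bs_append_Cons)
  have shift: "count_fps total_length ((\<lambda>(x, y). (x @ [C], y)) ` covered_pairs)
      = fps_X ^ 1 * (count_fps total_length covered_pairs :: 'r fps)"
    by (rule count_fps_image_shift[of _ _ _ total_length]) (auto simp: inj_on_def)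
  show T: "count_fps total_length (covered_pairs_endC True)
      = fps_X * (count_fps total_length covered_pairs :: 'r fps)"
    unfolding endC shift by simp
  have "covered_pairs_endC False = covered_pairs - covered_pairs_endC True"
    "covered_pairs_endC True \<subseteq> covered_pairs"
    by (auto simp: covered_pairs_endC_def)
  then show "count_fps total_length (covered_pairs_endC False)
      = count_fps total_length covered_pairs
        - fps_X * (count_fps total_length covered_pairs :: 'r fps)"
    by (simp add: count_fps_Diff[OF finite_fibres_word_pairs] T)
qed

text \<open>After clearing the denominators of \<open>L\<close> and \<open>R\<close>, the linear system for \<open>(a, b)\<close> has
  determinant \<open>(1 - 8X + 21X\<^sup>2 - \<dots>) \<cdot> (1 - 8X + 22X\<^sup>2 - \<dots>)\<close>; the second factor is cancelled.\<close>

lemma good_pairs_system_solution: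
  fixes X L R a b :: "'a::idom"
  assumes L: "L * (1 - 3 * X + X ^ 2) = 1"
    and R: "R * (1 - 2 * X - X ^ 2 + X ^ 3) = (1 - X) * (1 - 2 * X) * L ^ 2"
    and a: "a = X ^ 2 * ((L - X * L) * L) + X ^ 2 * (a * ((L - X * L) * L))
      + X ^ 2 * (b * (R - X * R))"
    and b: "b = X ^ 2 * (X * L ^ 2) + X ^ 2 * (a * (X * L ^ 2)) + X ^ 2 * (b * (X * R))"
    and det: "1 - 8 * X + 22 * X ^ 2 - 21 * X ^ 3 - 4 * X ^ 4 + 15 * X ^ 5 - 7 * X ^ 6 + X ^ 7 \<noteq> 0"
  shows "(a + b) * (1 - 8 * X + 21 * X ^ 2 - 19 * X ^ 3 - 2 * X ^ 4 + 11 * X ^ 5 - 6 * X ^ 6 + X ^ 7)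
    = X ^ 2 * (1 - 2 * X - X ^ 2 + X ^ 3)"
proof -
  define u where "u = 1 - 3 * X + X ^ 2"
  define q where "q = 1 - 2 * X - X ^ 2 + X ^ 3"
  have L2: "L ^ 2 * u ^ 2 = 1" using L unfolding u_def by algebra
  have R': "R * q * u ^ 2 = (1 - X) * (1 - 2 * X)" using R L2 unfolding q_def by algebra
  have a': "a * (q * u ^ 2 - X ^ 2 * (1 - X) * q) - b * (X ^ 2 * (1 - X) ^ 2 * (1 - 2 * X))
      = X ^ 2 * (1 - X) * q"
  proof -
    have "a * (q * u ^ 2) = (X ^ 2 * ((L - X * L) * L) + X ^ 2 * (a * ((L - X * L) * L))
        + X ^ 2 * (b * (R - X * R))) * (q * u ^ 2)"
      using a by simp
    also have "\<dots> = X ^ 2 * (1 - X) * q * (L ^ 2 * u ^ 2)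
        + X ^ 2 * a * (1 - X) * q * (L ^ 2 * u ^ 2) + X ^ 2 * b * (1 - X) * (R * q * u ^ 2)"
      by algebra
    finally show ?thesis unfolding L2 R' by algebra
  qed
  have b': "b * (q * u ^ 2 - X ^ 3 * (1 - X) * (1 - 2 * X)) - a * (X ^ 3 * q) = X ^ 3 * q"
  proof -
    have "b * (q * u ^ 2) = (X ^ 2 * (X * L ^ 2) + X ^ 2 * (a * (X * L ^ 2))
        + X ^ 2 * (b * (X * R))) * (q * u ^ 2)"
      using b by simp
    also have "\<dots> = X ^ 3 * q * (L ^ 2 * u ^ 2) + X ^ 3 * a * q * (L ^ 2 * u ^ 2)
        + X ^ 3 * b * (R * q * u ^ 2)"
      by algebra
    finally show ?thesis unfolding L2 R' by algebra
  qed
  have "(a + b) * ((1 - 8 * X + 21 * X ^ 2 - 19 * X ^ 3 - 2 * X ^ 4 + 11 * X ^ 5 - 6 * X ^ 6 + X ^ 7)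
      * (1 - 8 * X + 22 * X ^ 2 - 21 * X ^ 3 - 4 * X ^ 4 + 15 * X ^ 5 - 7 * X ^ 6 + X ^ 7))
    = X ^ 2 * (1 - 2 * X - X ^ 2 + X ^ 3)
      * (1 - 8 * X + 22 * X ^ 2 - 21 * X ^ 3 - 4 * X ^ 4 + 15 * X ^ 5 - 7 * X ^ 6 + X ^ 7)"
    using a' b' unfolding u_def q_def by algebra
  then show ?thesis using det by (simp add: mult.assoc[symmetric])
qed

lemma t_count_fps:
  "Abs_fps (\<lambda>n. if 2 \<le> n then real (t_count n) else 0) = count_fps total_length good_pairs"
proof (rule fps_ext)
  fix n
  have "2 \<le> length w + length z" if "good_pair w z" for w z
    using good_pair_hd[OF that] by (cases w; cases z) auto
  then have "{p \<in> good_pairs. total_length p = n} =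
      (if 2 \<le> n then {(w, z). length w + length z = n \<and> good_pair w z} else {})"
    by (auto simp: good_pairs_def)
  then show "fps_nth (Abs_fps (\<lambda>n. if 2 \<le> n then real (t_count n) else 0)) n
      = fps_nth (count_fps total_length good_pairs) n"
    by (simp add: t_count_def)
qed

theorem mainTheorem10:
  shows "Abs_fps (\<lambda>n. if 2 \<le> n then real (t_count n) else 0) =
    fps_X ^ 2 * (1 - 2 * fps_X - fps_X ^ 2 + fps_X ^ 3) /
    (1 - 8 * fps_X + 21 * fps_X ^ 2 - 19 * fps_X ^ 3 - 2 * fps_X ^ 4 + 11 * fps_X ^ 5
      - 6 * fps_X ^ 6 + fps_X ^ 7)"
proof -
  note explicit = count_fps_body_pairs_endC count_fps_covered_pairs_endC
  note count_F = count_fps_good_pairs_endC[of False, where 'r = real, unfolded explicit]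
  note count_T = count_fps_good_pairs_endC[of True, where 'r = real, unfolded explicit]
  have solution: "count_fps total_length good_pairs * (1 - 8 * fps_X + 21 * fps_X ^ 2
      - 19 * fps_X ^ 3 - 2 * fps_X ^ 4 + 11 * fps_X ^ 5 - 6 * fps_X ^ 6 + fps_X ^ 7)
    = (fps_X ^ 2 * (1 - 2 * fps_X - fps_X ^ 2 + fps_X ^ 3) :: real fps)"
    unfolding count_fps_good_pairs
    by (rule good_pairs_system_solution[OF count_fps_bodies count_fps_covered_pairs
          count_F count_T])
      (auto simp: fps_nonzero_nth intro!: exI[of _ 0])
  show ?thesis
    unfolding t_count_fps solution[symmetric]
    by (subst nonzero_mult_div_cancel_right) (auto simp: fps_nonzero_nth intro!: exI[of _ 0])
qed

end
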